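(* Let $\mathcal{G}$ be a finite subset of $\mathrm{U}(d)$, let $\nu_\mathcal{G}$ and $\nu_{\mathcal{G}^\dagger}$ be the uniform probability measures on $\mathcal{G}$ and on $\mathcal{G}^\dagger=\{U^\dagger:U\in\mathcal{G}\}$, and let $\nu_{\mathcal{G}\mathcal{G}^\dagger}=\nu_\mathcal{G}*\nu_{\mathcal{G}^\dagger}$. Then for every positive integer $t$, $$\delta(\nu_\mathcal{G},t)^2=\delta(\nu_{\mathcal{G}\mathcal{G}^\dagger},t)\quad\text{and}\quad \tfrac12\,g(\nu_\mathcal{G}*\nu_{\mathcal{G}^\dagger},t)\le g(\nu_\mathcal{G},t)\le g(\nu_\mathcal{G}*\nu_{\mathcal{G}^\dagger},t).$$
   Context: For a probability measure $\nu$ on $\mathrm{U}(d)$: $T_{\nu,t}=\int\mathrm{d}\nu(U)\,U^{\otimes t}\otimes\bar U^{\otimes t}$, $\delta(\nu,t)=\|T_{\nu,t}-T_{\mu,t}\|_\infty$ with $\mu$ the Haar measure, and $g(\nu,t)=1-\delta(\nu,t)$. $*$ denotes convolution of measures (distribution of the product of independent samples). *)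

theory Defs
  imports "HOL-Analysis.Analysis" "HOL-Probability.Probability"
begin

text \<open>d x d complex matrices; the dimension d is the cardinality of the finite index type 'd.\<close>
type_synonym 'd cmat = "complex^'d^'d"

definition adjoint :: "'d::finite cmat \<Rightarrow> 'd cmat" where
  "adjoint U = (\<chi> i j. cnj (U $ j $ i))"

definition unitary_group :: "'d::finite cmat set" where
  "unitary_group = {U. U ** adjoint U = mat 1}"

text \<open>Basis index set of (C^d)^{\<otimes> 2t}: words of length 2t over 'd.
  The first t letters index the factors U^{\<otimes> t}, the last t letters the factors conj(U)^{\<otimes> t}.\<close>
definition idx :: "nat \<Rightarrow> 'd::finite list set" where
  "idx t = {xs. length xs = 2 * t}"

text \<open>Matrix entry of U^{\<otimes> t} \<otimes> conj(U)^{\<otimes> t} in the standard product basis (Kronecker product).\<close>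
definition tensor_entry :: "nat \<Rightarrow> 'd::finite cmat \<Rightarrow> 'd list \<Rightarrow> 'd list \<Rightarrow> complex" where
  "tensor_entry t U is js =
     (\<Prod>k<t. U $ (is ! k) $ (js ! k)) * (\<Prod>k<t. cnj (U $ (is ! (t + k)) $ (js ! (t + k))))"

definition T_op :: "'d::finite cmat measure \<Rightarrow> nat \<Rightarrow> 'd list \<Rightarrow> 'd list \<Rightarrow> complex" where
  "T_op \<nu> t is js = (LINT U|\<nu>. tensor_entry t U is js)"

definition op_norm :: "'i set \<Rightarrow> ('i \<Rightarrow> 'i \<Rightarrow> complex) \<Rightarrow> real" where
  "op_norm I A = Sup {sqrt (\<Sum>i\<in>I. (cmod (\<Sum>j\<in>I. A i j * v j))\<^sup>2) | v.
                        (\<Sum>j\<in>I. (cmod (v j))\<^sup>2) \<le> 1}"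

definition is_haar :: "'d::finite cmat measure \<Rightarrow> bool" where
  "is_haar \<mu> \<longleftrightarrow> prob_space \<mu> \<and> sets \<mu> = sets borel \<and>
     emeasure \<mu> unitary_group = 1 \<and>
     (\<forall>V\<in>unitary_group. distr \<mu> borel (\<lambda>U. V ** U) = \<mu> \<and> distr \<mu> borel (\<lambda>U. U ** V) = \<mu>)"

definition delta :: "'d::finite cmat measure \<Rightarrow> 'd cmat measure \<Rightarrow> nat \<Rightarrow> real" where
  "delta \<mu> \<nu> t = op_norm (idx t) (\<lambda>is js. T_op \<nu> t is js - T_op \<mu> t is js)"

definition gap :: "'d::finite cmat measure \<Rightarrow> 'd cmat measure \<Rightarrow> nat \<Rightarrow> real" where
  "gap \<mu> \<nu> t = 1 - delta \<mu> \<nu> t"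

definition unif :: "'d::finite cmat set \<Rightarrow> 'd cmat pmf" where
  "unif G = pmf_of_set G"

definition conv :: "'d::finite cmat pmf \<Rightarrow> 'd cmat pmf \<Rightarrow> 'd cmat pmf" where
  "conv p q = map_pmf (\<lambda>(U, V). U ** V) (pair_pmf p q)"

end

theory Submission
  imports Defs
begin

text \<open>Write \<open>A = T\<^sub>\<nu>\<close> and \<open>P = T\<^sub>\<mu>\<close>. Invariance of the Haar measure makes \<open>P\<close> an orthogonal
  projection with \<open>A P = P A\<^sup>* = P\<close>, while the moment operator of \<open>\<nu> * \<nu>\<^sup>\<dagger>\<close> is \<open>A A\<^sup>*\<close>.
  Hence \<open>(A - P) (A - P)\<^sup>* = A A\<^sup>* - P\<close>, and the C*-identity \<open>\<parallel>B\<parallel>\<^sup>2 = \<parallel>B B\<^sup>*\<parallel>\<close> gives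
  \<open>\<delta>(\<nu>)\<^sup>2 = \<delta>(\<nu> * \<nu>\<^sup>\<dagger>)\<close>. As an average of unitaries \<open>A\<close> is a contraction, so
  \<open>A - P = A (1 - P)\<close> has norm at most 1, and the gap inequalities are
  \<open>(1 - \<delta>\<^sup>2) / 2 \<le> 1 - \<delta> \<le> 1 - \<delta>\<^sup>2\<close> for \<open>0 \<le> \<delta> \<le> 1\<close>.\<close>

section \<open>Matrices indexed by a finite set\<close>

text \<open>Matrices and vectors indexed by a finite set \<open>I\<close> are plain functions; only their values
  on \<open>I\<close> matter, which is also all that \<^const>\<open>op_norm\<close> looks at.\<close>

definition mat_mult :: "'i set \<Rightarrow> ('i \<Rightarrow> 'i \<Rightarrow> complex) \<Rightarrow> ('i \<Rightarrow> 'i \<Rightarrow> complex) \<Rightarrow> 'i \<Rightarrow> 'i \<Rightarrow> complex"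
  where "mat_mult I X Y = (\<lambda>i j. \<Sum>k\<in>I. X i k * Y k j)"

definition mat_adj :: "('i \<Rightarrow> 'i \<Rightarrow> complex) \<Rightarrow> 'i \<Rightarrow> 'i \<Rightarrow> complex"
  where "mat_adj X = (\<lambda>i j. cnj (X j i))"

definition mat_apply :: "'i set \<Rightarrow> ('i \<Rightarrow> 'i \<Rightarrow> complex) \<Rightarrow> ('i \<Rightarrow> complex) \<Rightarrow> 'i \<Rightarrow> complex"
  where "mat_apply I X v = (\<lambda>i. \<Sum>j\<in>I. X i j * v j)"

definition vec_norm :: "'i set \<Rightarrow> ('i \<Rightarrow> complex) \<Rightarrow> real"
  where "vec_norm I v = L2_set (\<lambda>i. cmod (v i)) I"

definition vec_inner :: "'i set \<Rightarrow> ('i \<Rightarrow> complex) \<Rightarrow> ('i \<Rightarrow> complex) \<Rightarrow> complex"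
  where "vec_inner I v w = (\<Sum>i\<in>I. cnj (v i) * w i)"

lemma mat_adj_mat_adj [simp]: "mat_adj (mat_adj X) = X"
  by (simp add: mat_adj_def)

lemma vec_norm_nonneg [simp]: "0 \<le> vec_norm I v"
  by (simp add: vec_norm_def)

lemma vec_norm_scaleR: "vec_norm I (\<lambda>i. of_real c * v i) = \<bar>c\<bar> * vec_norm I v"
  unfolding vec_norm_def by (simp add: norm_mult L2_set_right_distrib)

lemma vec_norm_eq_0D: "finite I \<Longrightarrow> vec_norm I v = 0 \<Longrightarrow> i \<in> I \<Longrightarrow> v i = 0"
  unfolding vec_norm_def using L2_set_eq_0_iff by fastforce

lemma norm_le_vec_norm: "finite I \<Longrightarrow> i \<in> I \<Longrightarrow> cmod (v i) \<le> vec_norm I v"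
  unfolding vec_norm_def by (rule member_le_L2_set)

lemma vec_norm_add_le: "vec_norm I (\<lambda>i. v i + w i) \<le> vec_norm I v + vec_norm I w"
proof -
  have "vec_norm I (\<lambda>i. v i + w i) \<le> L2_set (\<lambda>i. cmod (v i) + cmod (w i)) I"
    unfolding vec_norm_def by (rule L2_set_mono) (simp_all add: norm_triangle_ineq)
  also have "\<dots> \<le> vec_norm I v + vec_norm I w"
    unfolding vec_norm_def by (rule L2_set_triangle_ineq)
  finally show ?thesis .
qed

lemma vec_norm_sum_le:
  "finite G \<Longrightarrow> vec_norm I (\<lambda>i. \<Sum>U\<in>G. w U i) \<le> (\<Sum>U\<in>G. vec_norm I (w U))"
proof (induction G rule: finite_induct)
  case empty
  then show ?case by (simp add: vec_norm_def L2_set_0')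
next
  case (insert x F)
  then have "vec_norm I (\<lambda>i. \<Sum>U\<in>insert x F. w U i) = vec_norm I (\<lambda>i. w x i + (\<Sum>U\<in>F. w U i))"
    by simp
  also have "\<dots> \<le> vec_norm I (w x) + vec_norm I (\<lambda>i. \<Sum>U\<in>F. w U i)"
    by (rule vec_norm_add_le)
  finally show ?case using insert by simp
qed

lemma vec_inner_self: "vec_inner I v v = of_real ((vec_norm I v)\<^sup>2)"
  unfolding vec_inner_def vec_norm_def L2_set_def of_real_sum
  by (simp add: sum_nonneg complex_norm_square mult.commute del: of_real_power)

lemma vec_inner_commute: "vec_inner I w v = cnj (vec_inner I v w)"
  by (simp add: vec_inner_def mult.commute)

lemma vec_inner_cong:
  "(\<And>i. i \<in> I \<Longrightarrow> v i = v' i) \<Longrightarrow> (\<And>i. i \<in> I \<Longrightarrow> w i = w' i) \<Longrightarrow> vec_inner I v w = vec_inner I v' w'"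
  unfolding vec_inner_def by (intro sum.cong) auto

lemma vec_inner_diff:
  "vec_inner I (\<lambda>i. a i - b i) (\<lambda>i. c i - d i)
     = vec_inner I a c - vec_inner I a d - vec_inner I b c + vec_inner I b d"
  by (simp add: vec_inner_def algebra_simps sum_subtractf sum.distrib)

lemma vec_inner_Cauchy_Schwarz: "cmod (vec_inner I v w) \<le> vec_norm I v * vec_norm I w"
proof -
  have "cmod (vec_inner I v w) \<le> (\<Sum>i\<in>I. \<bar>cmod (v i)\<bar> * \<bar>cmod (w i)\<bar>)"
    unfolding vec_inner_def by (rule order_trans[OF norm_sum]) (simp add: norm_mult)
  also have "\<dots> \<le> vec_norm I v * vec_norm I w"
    unfolding vec_norm_def by (rule L2_set_mult_ineq)
  finally show ?thesis .
qed

lemma vec_inner_mat_apply: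
  "vec_inner I (mat_apply I X v) w = vec_inner I v (mat_apply I (mat_adj X) w)"
proof -
  have "vec_inner I (mat_apply I X v) w = (\<Sum>i\<in>I. \<Sum>j\<in>I. cnj (X i j) * cnj (v j) * w i)"
    by (simp add: vec_inner_def mat_apply_def sum_distrib_right sum_distrib_left mult_ac)
  also have "\<dots> = (\<Sum>j\<in>I. \<Sum>i\<in>I. cnj (X i j) * cnj (v j) * w i)"
    by (rule sum.swap)
  also have "\<dots> = vec_inner I v (mat_apply I (mat_adj X) w)"
    by (simp add: vec_inner_def mat_apply_def mat_adj_def sum_distrib_left mult_ac)
  finally show ?thesis .
qed

lemma mat_apply_mat_mult:
  "mat_apply I (mat_mult I X Y) v = mat_apply I X (mat_apply I Y v)"
proof
  fix i
  have "mat_apply I (mat_mult I X Y) v i = (\<Sum>j\<in>I. \<Sum>k\<in>I. X i k * Y k j * v j)"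
    by (simp add: mat_apply_def mat_mult_def sum_distrib_right)
  also have "\<dots> = (\<Sum>k\<in>I. \<Sum>j\<in>I. X i k * Y k j * v j)"
    by (rule sum.swap)
  also have "\<dots> = mat_apply I X (mat_apply I Y v) i"
    by (simp add: mat_apply_def sum_distrib_left mult_ac)
  finally show "mat_apply I (mat_mult I X Y) v i = mat_apply I X (mat_apply I Y v) i" .
qed

lemma op_norm_eq_Sup: "op_norm I A = Sup {vec_norm I (mat_apply I A v) | v. vec_norm I v \<le> 1}"
  unfolding op_norm_def vec_norm_def L2_set_def mat_apply_def by simp

lemma bdd_above_op_norm:
  assumes "finite I"
  shows "bdd_above {vec_norm I (mat_apply I A v) | v. vec_norm I v \<le> 1}"
proof (rule bdd_aboveI)
  fix x assume "x \<in> {vec_norm I (mat_apply I A v) | v. vec_norm I v \<le> 1}"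
  then obtain v where x: "x = vec_norm I (mat_apply I A v)" and v: "vec_norm I v \<le> 1" by auto
  have entry: "cmod (mat_apply I A v i) \<le> (\<Sum>j\<in>I. cmod (A i j))" for i
  proof -
    have "cmod (mat_apply I A v i) \<le> (\<Sum>j\<in>I. cmod (A i j) * cmod (v j))"
      unfolding mat_apply_def by (rule order_trans[OF norm_sum]) (simp add: norm_mult)
    also have "\<dots> \<le> (\<Sum>j\<in>I. cmod (A i j))"
    proof (rule sum_mono)
      fix j assume "j \<in> I"
      then have "cmod (v j) \<le> 1" using norm_le_vec_norm[OF assms, of j v] v by simp
      then show "cmod (A i j) * cmod (v j) \<le> cmod (A i j)" by (simp add: mult_left_le)
    qed
    finally show ?thesis .
  qed
  have "x \<le> (\<Sum>i\<in>I. cmod (mat_apply I A v i))"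
    unfolding x vec_norm_def by (rule L2_set_le_sum) simp
  also have "\<dots> \<le> (\<Sum>i\<in>I. \<Sum>j\<in>I. cmod (A i j))"
    by (intro sum_mono entry)
  finally show "x \<le> (\<Sum>i\<in>I. \<Sum>j\<in>I. cmod (A i j))" .
qed

lemma op_norm_upper:
  "finite I \<Longrightarrow> vec_norm I v \<le> 1 \<Longrightarrow> vec_norm I (mat_apply I A v) \<le> op_norm I A"
  unfolding op_norm_eq_Sup by (rule cSup_upper[OF _ bdd_above_op_norm]) auto

lemma op_norm_nonneg: "finite I \<Longrightarrow> 0 \<le> op_norm I A"
  by (rule order_trans[OF vec_norm_nonneg op_norm_upper, of I "\<lambda>_. 0"])
    (simp_all add: vec_norm_def L2_set_0')

lemma norm_mat_apply_le_op_norm: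
  assumes "finite I"
  shows "vec_norm I (mat_apply I A v) \<le> op_norm I A * vec_norm I v"
proof (cases "vec_norm I v = 0")
  case True
  then have "mat_apply I A v i = 0" for i
    using vec_norm_eq_0D[OF assms True] unfolding mat_apply_def by simp
  then show ?thesis using True by (simp add: vec_norm_def L2_set_0')
next
  case False
  then have pos: "vec_norm I v > 0" using vec_norm_nonneg[of I v] by linarith
  define c where "c = 1 / vec_norm I v"
  have "vec_norm I (\<lambda>i. of_real c * v i) = 1"
    unfolding vec_norm_scaleR using pos by (simp add: c_def)
  moreover have "mat_apply I A (\<lambda>i. of_real c * v i) = (\<lambda>i. of_real c * mat_apply I A v i)"
    by (simp add: mat_apply_def sum_distrib_left mult_ac)
  ultimately have "c * vec_norm I (mat_apply I A v) \<le> op_norm I A"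
    using op_norm_upper[OF assms, of "\<lambda>i. of_real c * v i" A] pos
    by (simp only: vec_norm_scaleR) (simp add: c_def)
  then show ?thesis using pos by (simp add: c_def field_simps)
qed

lemma op_norm_le:
  assumes "finite I" "0 \<le> c" "\<And>v. vec_norm I (mat_apply I A v) \<le> c * vec_norm I v"
  shows "op_norm I A \<le> c"
  unfolding op_norm_eq_Sup
proof (rule cSup_least)
  show "{vec_norm I (mat_apply I A v) | v. vec_norm I v \<le> 1} \<noteq> {}"
    by (auto intro!: exI[of _ "\<lambda>_. 0"] simp: vec_norm_def L2_set_def)
  fix x assume "x \<in> {vec_norm I (mat_apply I A v) | v. vec_norm I v \<le> 1}"
  then obtain v where "x = vec_norm I (mat_apply I A v)" "vec_norm I v \<le> 1" by auto
  then show "x \<le> c" using assms(3)[of v] assms(2) by (metis mult_left_le order_trans)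
qed

lemma norm_mat_adj_apply_power2_le:
  assumes "finite I"
  shows "(vec_norm I (mat_apply I (mat_adj X) v))\<^sup>2
           \<le> vec_norm I v * vec_norm I (mat_apply I X (mat_apply I (mat_adj X) v))"
proof -
  define w where "w = mat_apply I (mat_adj X) v"
  have "of_real ((vec_norm I w)\<^sup>2) = vec_inner I v (mat_apply I X w)"
    unfolding vec_inner_self[symmetric] w_def by (subst vec_inner_mat_apply) simp
  then have "(vec_norm I w)\<^sup>2 = Re (vec_inner I v (mat_apply I X w))"
    by (metis Re_complex_of_real)
  also have "\<dots> \<le> vec_norm I v * vec_norm I (mat_apply I X w)"
    by (rule order_trans[OF complex_Re_le_cmod vec_inner_Cauchy_Schwarz])
  finally show ?thesis unfolding w_def .
qed

lemma op_norm_mat_adj_le: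
  assumes "finite I"
  shows "op_norm I (mat_adj B) \<le> op_norm I B"
proof (rule op_norm_le[OF assms op_norm_nonneg[OF assms]])
  fix v
  let ?w = "mat_apply I (mat_adj B) v"
  have "(vec_norm I ?w)\<^sup>2 \<le> vec_norm I v * vec_norm I (mat_apply I B ?w)"
    by (rule norm_mat_adj_apply_power2_le[OF assms])
  also have "\<dots> \<le> vec_norm I v * (op_norm I B * vec_norm I ?w)"
    by (intro mult_left_mono norm_mat_apply_le_op_norm[OF assms] vec_norm_nonneg)
  finally have "vec_norm I ?w * vec_norm I ?w \<le> (op_norm I B * vec_norm I v) * vec_norm I ?w"
    by (simp add: power2_eq_square mult_ac)
  then show "vec_norm I ?w \<le> op_norm I B * vec_norm I v"
  proof (cases "vec_norm I ?w = 0")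
    case False
    then show ?thesis
      using \<open>vec_norm I ?w * vec_norm I ?w \<le> _\<close> vec_norm_nonneg[of I ?w]
      by (simp add: mult_right_le_imp_le)
  qed (simp add: op_norm_nonneg[OF assms])
qed

lemma op_norm_mat_adj: "finite I \<Longrightarrow> op_norm I (mat_adj B) = op_norm I B"
  using op_norm_mat_adj_le[of I B] op_norm_mat_adj_le[of I "mat_adj B"] by simp

lemma op_norm_power2_eq_op_norm_mult_mat_adj:
  assumes "finite I"
  shows "(op_norm I B)\<^sup>2 = op_norm I (mat_mult I B (mat_adj B))"
proof -
  define n where "n = op_norm I B"
  define m where "m = op_norm I (mat_mult I B (mat_adj B))"
  have n0: "0 \<le> n" and m0: "0 \<le> m"
    unfolding n_def m_def by (simp_all add: op_norm_nonneg assms)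
  have "n \<le> sqrt m"
    unfolding n_def op_norm_mat_adj[OF assms, of B, symmetric]
  proof (rule op_norm_le[OF assms])
    fix v
    have "(vec_norm I (mat_apply I (mat_adj B) v))\<^sup>2
            \<le> vec_norm I v * vec_norm I (mat_apply I (mat_mult I B (mat_adj B)) v)"
      using norm_mat_adj_apply_power2_le[OF assms] by (simp add: mat_apply_mat_mult)
    also have "\<dots> \<le> vec_norm I v * (m * vec_norm I v)"
      unfolding m_def by (intro mult_left_mono norm_mat_apply_le_op_norm[OF assms] vec_norm_nonneg)
    also have "\<dots> = (sqrt m * vec_norm I v)\<^sup>2"
      using m0 by (simp add: power2_eq_square mult_ac)
    finally show "vec_norm I (mat_apply I (mat_adj B) v) \<le> sqrt m * vec_norm I v"
      by (rule power2_le_imp_le) (simp add: m0)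
  qed (simp add: m0)
  then have "n\<^sup>2 \<le> m"
    using power_mono[of n "sqrt m" 2] n0 m0 by simp
  moreover have "m \<le> n * n"
    unfolding m_def
  proof (rule op_norm_le[OF assms])
    fix v
    have "vec_norm I (mat_apply I (mat_mult I B (mat_adj B)) v)
            = vec_norm I (mat_apply I B (mat_apply I (mat_adj B) v))"
      by (simp add: mat_apply_mat_mult)
    also have "\<dots> \<le> n * vec_norm I (mat_apply I (mat_adj B) v)"
      unfolding n_def by (rule norm_mat_apply_le_op_norm[OF assms])
    also have "\<dots> \<le> n * (n * vec_norm I v)"
      using norm_mat_apply_le_op_norm[OF assms, of "mat_adj B" v] n0
      unfolding n_def op_norm_mat_adj[OF assms] by (intro mult_left_mono)
    finally show "vec_norm I (mat_apply I (mat_mult I B (mat_adj B)) v) \<le> n * n * vec_norm I v"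
      by (simp add: mult_ac)
  qed (simp add: n0)
  ultimately show ?thesis unfolding n_def m_def by (simp add: power2_eq_square)
qed

lemma mat_adj_eq_if_mat_mult_adj_self:
  assumes "mat_mult I (mat_adj P) P = P"
  shows "mat_adj P = P"
proof -
  have "mat_adj (mat_mult I (mat_adj P) P) = mat_mult I (mat_adj P) P"
    by (simp add: mat_adj_def mat_mult_def mult.commute)
  then show ?thesis using assms by simp
qed

lemma mat_mult_diff_proj_mat_adj:
  assumes PP: "mat_mult I (mat_adj P) P = P"
    and AP: "mat_mult I A P = P" and PA: "mat_mult I P (mat_adj A) = P"
  shows "mat_mult I (\<lambda>i j. A i j - P i j) (mat_adj (\<lambda>i j. A i j - P i j))
           = (\<lambda>i j. mat_mult I A (mat_adj A) i j - P i j)"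
proof -
  have P_adj: "mat_adj P = P"
    by (rule mat_adj_eq_if_mat_mult_adj_self[OF PP])
  have "mat_mult I (\<lambda>i j. A i j - P i j) (mat_adj (\<lambda>i j. A i j - P i j))
      = (\<lambda>i j. mat_mult I A (mat_adj A) i j - mat_mult I P (mat_adj A) i j
                - (mat_mult I A (mat_adj P) i j - mat_mult I P (mat_adj P) i j))"
    by (simp add: mat_mult_def mat_adj_def left_diff_distrib right_diff_distrib sum_subtractf)
  also have "\<dots> = (\<lambda>i j. mat_mult I A (mat_adj A) i j - P i j)"
    using PP unfolding P_adj AP PA by simp
  finally show ?thesis .
qed

lemma vec_norm_diff_proj_le:
  assumes PP: "mat_mult I (mat_adj P) P = P"
  shows "vec_norm I (\<lambda>i. v i - mat_apply I P v i) \<le> vec_norm I v"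
proof -
  define Pv where "Pv = mat_apply I P v"
  have "vec_inner I Pv Pv = vec_inner I v (mat_apply I (mat_mult I (mat_adj P) P) v)"
    unfolding Pv_def vec_inner_mat_apply mat_apply_mat_mult ..
  then have vPv: "vec_inner I v Pv = vec_inner I Pv Pv"
    unfolding PP Pv_def by (rule sym)
  then have Pvv: "vec_inner I Pv v = vec_inner I Pv Pv"
    unfolding vec_inner_commute[of I Pv v] vPv vec_inner_self by simp
  have "vec_inner I (\<lambda>i. v i - Pv i) (\<lambda>i. v i - Pv i) = vec_inner I v v - vec_inner I Pv Pv"
    unfolding vec_inner_diff vPv Pvv by simp
  then have "(vec_norm I (\<lambda>i. v i - Pv i))\<^sup>2 = (vec_norm I v)\<^sup>2 - (vec_norm I Pv)\<^sup>2"
    unfolding vec_inner_self of_real_diff[symmetric] of_real_eq_iff .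
  then have "(vec_norm I (\<lambda>i. v i - Pv i))\<^sup>2 \<le> (vec_norm I v)\<^sup>2"
    by simp
  then show ?thesis
    unfolding Pv_def[symmetric] by (rule power2_le_imp_le) simp
qed

lemma op_norm_diff_proj_le_1:
  assumes fin: "finite I" and PP: "mat_mult I (mat_adj P) P = P" and AP: "mat_mult I A P = P"
    and contraction: "\<And>v. vec_norm I (mat_apply I A v) \<le> vec_norm I v"
  shows "op_norm I (\<lambda>i j. A i j - P i j) \<le> 1"
proof (rule op_norm_le[OF fin])
  fix v
  let ?u = "\<lambda>i. v i - mat_apply I P v i"
  have APv: "mat_apply I A (mat_apply I P v) = mat_apply I P v"
    unfolding mat_apply_mat_mult[symmetric] AP ..
  have "mat_apply I (\<lambda>i j. A i j - P i j) v = (\<lambda>i. mat_apply I A v i - mat_apply I P v i)"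
    by (simp add: mat_apply_def left_diff_distrib sum_subtractf)
  also have "\<dots> = (\<lambda>i. mat_apply I A v i - mat_apply I A (mat_apply I P v) i)"
    unfolding APv ..
  also have "\<dots> = mat_apply I A ?u"
    by (simp add: mat_apply_def right_diff_distrib sum_subtractf)
  finally have "vec_norm I (mat_apply I (\<lambda>i j. A i j - P i j) v) \<le> vec_norm I ?u"
    using contraction by simp
  also have "\<dots> \<le> vec_norm I v"
    by (rule vec_norm_diff_proj_le[OF PP])
  finally show "vec_norm I (mat_apply I (\<lambda>i j. A i j - P i j) v) \<le> 1 * vec_norm I v"
    by simp
qed simp

lemma vec_norm_mat_apply_isometry:
  assumes fin: "finite I"
    and unitary: "\<And>i j. i \<in> I \<Longrightarrow> j \<in> I \<Longrightarrow> mat_mult I (mat_adj X) X i j = (if i = j then 1 else 0)"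
  shows "vec_norm I (mat_apply I X v) = vec_norm I v"
proof -
  have "mat_apply I (mat_mult I (mat_adj X) X) v i = v i" if "i \<in> I" for i
  proof -
    have "mat_apply I (mat_mult I (mat_adj X) X) v i = (\<Sum>j\<in>I. if i = j then v j else 0)"
      unfolding mat_apply_def using unitary that by (intro sum.cong) auto
    also have "\<dots> = v i" using that fin by simp
    finally show ?thesis .
  qed
  then have "vec_inner I (mat_apply I X v) (mat_apply I X v) = vec_inner I v v"
    unfolding vec_inner_mat_apply mat_apply_mat_mult[symmetric]
    by (intro vec_inner_cong) auto
  then have "(vec_norm I (mat_apply I X v))\<^sup>2 = (vec_norm I v)\<^sup>2"
    unfolding vec_inner_self of_real_eq_iff .
  then show ?thesis by simp
qed

section \<open>Tensor powers of unitaries\<close>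

lemma sum_lists_length_prod:
  fixes f :: "nat \<Rightarrow> 'a::finite \<Rightarrow> 'b::comm_semiring_1"
  shows "(\<Sum>xs | length xs = n. \<Prod>k<n. f k (xs ! k)) = (\<Prod>k<n. \<Sum>j\<in>UNIV. f k j)"
proof (induction n arbitrary: f)
  case 0
  then show ?case by simp
next
  case (Suc n)
  have lists_Suc: "{xs :: 'a list. length xs = Suc n} = (\<lambda>(x, xs). x # xs) ` (UNIV \<times> {xs. length xs = n})"
    by (auto simp: length_Suc_conv image_iff)
  have inj: "inj_on (\<lambda>(x, xs). x # xs) (UNIV \<times> {xs :: 'a list. length xs = n})"
    by (auto simp: inj_on_def)
  have "(\<Sum>xs | length xs = Suc n. \<Prod>k<Suc n. f k (xs ! k))
      = (\<Sum>x\<in>UNIV. \<Sum>xs | length xs = n. f 0 x * (\<Prod>k<n. f (Suc k) (xs ! k)))"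
    unfolding lists_Suc sum.reindex[OF inj]
    by (simp add: sum.cartesian_product prod.lessThan_Suc_shift case_prod_beta del: prod.lessThan_Suc)
  also have "\<dots> = (\<Sum>x\<in>UNIV. f 0 x) * (\<Sum>xs | length xs = n. \<Prod>k<n. f (Suc k) (xs ! k))"
    by (simp add: sum_product)
  also have "\<dots> = (\<Sum>x\<in>UNIV. f 0 x) * (\<Prod>k<n. \<Sum>j\<in>UNIV. f (Suc k) j)"
    using Suc.IH[of "\<lambda>k. f (Suc k)"] by simp
  also have "\<dots> = (\<Prod>k<Suc n. \<Sum>j\<in>UNIV. f k j)"
    by (simp add: prod.lessThan_Suc_shift del: prod.lessThan_Suc)
  finally show ?case .
qed

lemma prod_lessThan_double:
  fixes n :: nat
  shows "(\<Prod>k<2 * n. g k) = (\<Prod>k<n. g k) * (\<Prod>k<n. g (n + k))"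
proof -
  have "(\<Prod>k<2 * n. g k) = prod g {0..<n} * prod g {n..<2 * n}"
    by (simp add: atLeast0LessThan[symmetric] prod.atLeastLessThan_concat)
  also have "prod g {n..<2 * n} = (\<Prod>k<n. g (n + k))"
    using prod.shift_bounds_nat_ivl[of g 0 n n] by (simp add: mult_2 atLeast0LessThan add.commute)
  finally show ?thesis by (simp add: atLeast0LessThan)
qed

lemma finite_idx: "finite (idx t :: 'd::finite list set)"
  unfolding idx_def using finite_lists_length_eq[of "UNIV :: 'd set" "2 * t"] by simp

definition tensor_factor :: "nat \<Rightarrow> 'd::finite cmat \<Rightarrow> 'd list \<Rightarrow> 'd list \<Rightarrow> nat \<Rightarrow> complex" where
  "tensor_factor t U xs ys k =
     (if k < t then U $ (xs ! k) $ (ys ! k) else cnj (U $ (xs ! k) $ (ys ! k)))"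

lemma tensor_entry_eq_prod_tensor_factor:
  "tensor_entry t U xs ys = (\<Prod>k<2 * t. tensor_factor t U xs ys k)"
  unfolding prod_lessThan_double tensor_entry_def tensor_factor_def by simp

lemma tensor_entry_mult:
  "tensor_entry t (U ** V) = mat_mult (idx t) (tensor_entry t U) (tensor_entry t V)"
proof (intro ext)
  fix xs ys
  define f where "f k j = (if k < t then U $ (xs ! k) $ j * V $ j $ (ys ! k)
                           else cnj (U $ (xs ! k) $ j) * cnj (V $ j $ (ys ! k)))" for k j
  have "tensor_entry t (U ** V) xs ys = (\<Prod>k<2 * t. \<Sum>j\<in>UNIV. f k j)"
    unfolding tensor_entry_eq_prod_tensor_factor tensor_factor_def f_def
    by (intro prod.cong) (auto simp: matrix_matrix_mult_def)
  also have "\<dots> = (\<Sum>ks\<in>idx t. \<Prod>k<2 * t. f k (ks ! k))"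
    unfolding idx_def by (rule sum_lists_length_prod[symmetric])
  also have "\<dots> = mat_mult (idx t) (tensor_entry t U) (tensor_entry t V) xs ys"
    unfolding mat_mult_def tensor_entry_eq_prod_tensor_factor tensor_factor_def f_def
      prod.distrib[symmetric]
    by (intro sum.cong prod.cong) auto
  finally show "tensor_entry t (U ** V) xs ys = mat_mult (idx t) (tensor_entry t U) (tensor_entry t V) xs ys" .
qed

lemma tensor_entry_adjoint: "tensor_entry t (adjoint U) = mat_adj (tensor_entry t U)"
  by (simp add: fun_eq_iff tensor_entry_def adjoint_def mat_adj_def mult.commute)

lemma tensor_entry_mat_1:
  assumes "xs \<in> idx t" "ys \<in> idx t"
  shows "tensor_entry t (mat 1) xs ys = (if xs = ys then 1 else 0)"
proof (cases "xs = ys")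
  case True
  then show ?thesis
    unfolding tensor_entry_eq_prod_tensor_factor tensor_factor_def
    by (simp add: mat_def cong: if_cong)
next
  case False
  then obtain k where k: "k < 2 * t" "xs ! k \<noteq> ys ! k"
    using assms by (auto simp: idx_def list_eq_iff_nth_eq)
  then have "tensor_factor t (mat 1) xs ys k = 0"
    by (simp add: tensor_factor_def mat_def)
  then show ?thesis
    using k False unfolding tensor_entry_eq_prod_tensor_factor by (auto intro!: prod_zero)
qed

lemma adjoint_adjoint [simp]: "adjoint (adjoint U) = U"
  by (simp add: adjoint_def vec_eq_iff)

lemma adjoint_mult_unitary: "U \<in> unitary_group \<Longrightarrow> adjoint U ** U = mat 1"
  unfolding unitary_group_def using matrix_left_right_inverse by blast

lemma adjoint_in_unitary_group: "U \<in> unitary_group \<Longrightarrow> adjoint U \<in> unitary_group"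
  using adjoint_mult_unitary unfolding unitary_group_def by simp

lemma norm_unitary_entry_le_1:
  assumes "U \<in> unitary_group"
  shows "cmod (U $ i $ j) \<le> 1"
proof -
  have "(U ** adjoint U) $ i $ i = 1"
    using assms by (simp add: unitary_group_def mat_def)
  then have "(\<Sum>k\<in>UNIV. complex_of_real ((cmod (U $ i $ k))\<^sup>2)) = 1"
    by (simp add: matrix_matrix_mult_def adjoint_def complex_norm_square del: of_real_power)
  then have "(\<Sum>k\<in>UNIV. (cmod (U $ i $ k))\<^sup>2) = 1"
    by (metis of_real_eq_1_iff of_real_sum)
  moreover have "(cmod (U $ i $ j))\<^sup>2 \<le> (\<Sum>k\<in>UNIV. (cmod (U $ i $ k))\<^sup>2)"
    by (rule member_le_sum) auto
  ultimately show ?thesis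
    by (simp add: power_le_one_iff abs_le_square_iff[of _ 1, simplified])
qed

lemma norm_tensor_entry_le_1: "U \<in> unitary_group \<Longrightarrow> cmod (tensor_entry t U xs ys) \<le> 1"
  unfolding tensor_entry_def norm_mult prod_norm[symmetric]
  using norm_unitary_entry_le_1 by (intro mult_le_one prod_le_1) (auto simp: prod_nonneg)

lemma continuous_on_tensor_entry: "continuous_on UNIV (\<lambda>U. tensor_entry t U xs ys)"
  unfolding tensor_entry_def by (intro continuous_intros)

lemma vec_norm_tensor_entry_apply:
  fixes U :: "'d::finite cmat"
  assumes "U \<in> unitary_group"
  shows "vec_norm (idx t) (mat_apply (idx t) (tensor_entry t U) v) = vec_norm (idx t) v"
proof (rule vec_norm_mat_apply_isometry[OF finite_idx])
  fix xs ys :: "'d list"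
  assume "xs \<in> idx t" "ys \<in> idx t"
  then show "mat_mult (idx t) (mat_adj (tensor_entry t U)) (tensor_entry t U) xs ys
               = (if xs = ys then 1 else 0)"
    unfolding tensor_entry_adjoint[symmetric] tensor_entry_mult[symmetric]
      adjoint_mult_unitary[OF assms] by (rule tensor_entry_mat_1)
qed

section \<open>Moment operators of the Haar measure\<close>

lemma is_haarD:
  assumes "is_haar \<mu>"
  shows "prob_space \<mu>" "sets \<mu> = sets borel" "AE U in \<mu>. U \<in> unitary_group"
proof -
  show ps: "prob_space \<mu>" and "sets \<mu> = sets borel"
    using assms unfolding is_haar_def by simp_all
  have "emeasure \<mu> unitary_group = 1"
    using assms unfolding is_haar_def by simp
  then show "AE U in \<mu>. U \<in> unitary_group"
    using prob_space.AE_in_set_eq_1[OF ps] emeasure_notin_sets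
    by (fastforce simp: measure_def)
qed

lemma borel_measurable_tensor_entry:
  "sets \<mu> = sets borel \<Longrightarrow> (\<lambda>U. tensor_entry t U xs ys) \<in> borel_measurable \<mu>"
  using borel_measurable_continuous_onI[OF continuous_on_tensor_entry] measurable_cong_sets
  by blast

lemma integrable_tensor_entry:
  assumes "is_haar \<mu>"
  shows "integrable \<mu> (\<lambda>U. tensor_entry t U xs ys)"
proof -
  interpret prob_space \<mu> using is_haarD[OF assms] by simp
  have "AE U in \<mu>. norm (tensor_entry t U xs ys) \<le> 1"
    using is_haarD(3)[OF assms] by eventually_elim (rule norm_tensor_entry_le_1)
  then show ?thesis
    by (rule integrable_const_bound) (rule borel_measurable_tensor_entry[OF is_haarD(2)[OF assms]])
qed

lemma T_op_distr_invariant: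
  assumes "is_haar \<mu>" "distr \<mu> borel f = \<mu>" "continuous_on UNIV f"
  shows "T_op \<mu> t xs ys = (LINT U|\<mu>. tensor_entry t (f U) xs ys)"
proof -
  have "f \<in> measurable \<mu> borel"
    using borel_measurable_continuous_onI[OF assms(3)] measurable_cong_sets is_haarD(2)[OF assms(1)]
    by blast
  then show ?thesis
    unfolding T_op_def
    by (subst (1) assms(2)[symmetric])
      (rule integral_distr[OF _ borel_measurable_continuous_onI[OF continuous_on_tensor_entry]])
qed

lemma T_op_haar_left_invariant:
  assumes "is_haar \<mu>" "V \<in> unitary_group"
  shows "mat_mult (idx t) (tensor_entry t V) (T_op \<mu> t) = T_op \<mu> t"
proof (intro ext)
  fix xs ys
  have "distr \<mu> borel (\<lambda>U. V ** U) = \<mu>"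
    using assms unfolding is_haar_def by simp
  moreover have "continuous_on UNIV (\<lambda>U::'a cmat. V ** U)"
    unfolding matrix_matrix_mult_def by (intro continuous_intros)
  ultimately have "T_op \<mu> t xs ys = (LINT U|\<mu>. tensor_entry t (V ** U) xs ys)"
    by (rule T_op_distr_invariant[OF assms(1)])
  also have "\<dots> = (\<Sum>ks\<in>idx t. LINT U|\<mu>. tensor_entry t V xs ks * tensor_entry t U ks ys)"
    unfolding tensor_entry_mult mat_mult_def
    by (rule Bochner_Integration.integral_sum) (simp add: integrable_tensor_entry[OF assms(1)])
  finally show "mat_mult (idx t) (tensor_entry t V) (T_op \<mu> t) xs ys = T_op \<mu> t xs ys"
    by (simp add: mat_mult_def T_op_def)
qed

lemma T_op_haar_right_invariant:
  assumes "is_haar \<mu>" "V \<in> unitary_group"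
  shows "mat_mult (idx t) (T_op \<mu> t) (tensor_entry t V) = T_op \<mu> t"
proof (intro ext)
  fix xs ys
  have "distr \<mu> borel (\<lambda>U. U ** V) = \<mu>"
    using assms unfolding is_haar_def by simp
  moreover have "continuous_on UNIV (\<lambda>U::'a cmat. U ** V)"
    unfolding matrix_matrix_mult_def by (intro continuous_intros)
  ultimately have "T_op \<mu> t xs ys = (LINT U|\<mu>. tensor_entry t (U ** V) xs ys)"
    by (rule T_op_distr_invariant[OF assms(1)])
  also have "\<dots> = (\<Sum>ks\<in>idx t. LINT U|\<mu>. tensor_entry t U xs ks * tensor_entry t V ks ys)"
    unfolding tensor_entry_mult mat_mult_def
    by (rule Bochner_Integration.integral_sum) (simp add: integrable_tensor_entry[OF assms(1)])
  finally show "mat_mult (idx t) (T_op \<mu> t) (tensor_entry t V) xs ys = T_op \<mu> t xs ys"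
    by (simp add: mat_mult_def T_op_def)
qed

lemma T_op_haar_adj_mult_self:
  assumes haar: "is_haar \<mu>"
  shows "mat_mult (idx t) (mat_adj (T_op \<mu> t)) (T_op \<mu> t) = T_op \<mu> t"
proof (intro ext)
  fix xs ys
  interpret prob_space \<mu> using is_haarD[OF haar] by simp
  have sets: "sets \<mu> = sets borel" by (rule is_haarD(2)[OF haar])
  have "mat_mult (idx t) (mat_adj (T_op \<mu> t)) (T_op \<mu> t) xs ys
      = (\<Sum>ks\<in>idx t. LINT U|\<mu>. tensor_entry t (adjoint U) xs ks * T_op \<mu> t ks ys)"
    by (simp add: mat_mult_def mat_adj_def T_op_def tensor_entry_adjoint)
  also have "\<dots> = (LINT U|\<mu>. mat_mult (idx t) (tensor_entry t (adjoint U)) (T_op \<mu> t) xs ys)"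
    unfolding mat_mult_def tensor_entry_adjoint mat_adj_def
    by (rule Bochner_Integration.integral_sum[symmetric]) (simp add: integrable_tensor_entry[OF haar])
  also have "\<dots> = (LINT U|\<mu>. T_op \<mu> t xs ys)"
  proof (rule integral_cong_AE)
    have [measurable]: "(\<lambda>U. tensor_entry t (adjoint U) as bs) \<in> borel_measurable \<mu>" for as bs
      unfolding tensor_entry_adjoint mat_adj_def measurable_cong_sets[OF sets refl]
      by (intro borel_measurable_continuous_onI continuous_on_cnj continuous_on_tensor_entry)
    show "(\<lambda>U. mat_mult (idx t) (tensor_entry t (adjoint U)) (T_op \<mu> t) xs ys) \<in> borel_measurable \<mu>"
      unfolding mat_mult_def by measurable
    show "AE U in \<mu>. mat_mult (idx t) (tensor_entry t (adjoint U)) (T_op \<mu> t) xs ys = T_op \<mu> t xs ys"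
      using is_haarD(3)[OF haar]
      by eventually_elim (simp add: T_op_haar_left_invariant[OF haar adjoint_in_unitary_group])
  qed simp
  finally show "mat_mult (idx t) (mat_adj (T_op \<mu> t)) (T_op \<mu> t) xs ys = T_op \<mu> t xs ys"
    by (simp add: prob_space)
qed

section \<open>Moment operators of finitely supported measures\<close>

lemma T_op_finite_pmf:
  assumes "finite (set_pmf p)"
  shows "T_op (measure_pmf p) t xs ys = (\<Sum>U\<in>set_pmf p. pmf p U * tensor_entry t U xs ys)"
  unfolding T_op_def
  by (subst integral_measure_pmf[OF assms]) (simp_all add: scaleR_conv_of_real)

lemma T_op_map_pmf_adjoint:
  "T_op (measure_pmf (map_pmf adjoint p)) t = mat_adj (T_op (measure_pmf p) t)"
  by (simp add: fun_eq_iff T_op_def tensor_entry_adjoint mat_adj_def)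

lemma T_op_conv:
  assumes "finite (set_pmf p)" "finite (set_pmf q)"
  shows "T_op (measure_pmf (conv p q)) t
           = mat_mult (idx t) (T_op (measure_pmf p) t) (T_op (measure_pmf q) t)"
proof (intro ext)
  fix xs ys
  have "T_op (measure_pmf (conv p q)) t xs ys
      = (LINT UV|measure_pmf (pair_pmf p q). tensor_entry t (fst UV ** snd UV) xs ys)"
    unfolding T_op_def conv_def by (simp add: case_prod_beta)
  also have "\<dots> = (\<Sum>(U, V)\<in>set_pmf p \<times> set_pmf q.
                    pmf p U * pmf q V * tensor_entry t (U ** V) xs ys)"
    using assms by (subst integral_measure_pmf[of "set_pmf p \<times> set_pmf q"])
      (auto simp: scaleR_conv_of_real pmf_pair intro!: sum.cong)
  also have "\<dots> = (\<Sum>ks\<in>idx t. \<Sum>U\<in>set_pmf p. \<Sum>V\<in>set_pmf q.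
                    (pmf p U * tensor_entry t U xs ks) * (pmf q V * tensor_entry t V ks ys))"
    unfolding sum.cartesian_product[symmetric] tensor_entry_mult mat_mult_def
    by (simp add: sum_distrib_left sum.swap[of _ "idx t"] mult_ac)
  also have "\<dots> = mat_mult (idx t) (T_op (measure_pmf p) t) (T_op (measure_pmf q) t) xs ys"
    unfolding mat_mult_def T_op_finite_pmf[OF assms(1)] T_op_finite_pmf[OF assms(2)]
    by (simp add: sum_product)
  finally show "T_op (measure_pmf (conv p q)) t xs ys
      = mat_mult (idx t) (T_op (measure_pmf p) t) (T_op (measure_pmf q) t) xs ys" .
qed

lemma vec_norm_T_op_apply_le:
  assumes fin: "finite (set_pmf p)" and unitary: "set_pmf p \<subseteq> unitary_group"
  shows "vec_norm (idx t) (mat_apply (idx t) (T_op (measure_pmf p) t) v) \<le> vec_norm (idx t) v"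
proof -
  let ?w = "\<lambda>U. mat_apply (idx t) (tensor_entry t U) v"
  have "mat_apply (idx t) (T_op (measure_pmf p) t) v = (\<lambda>xs. \<Sum>U\<in>set_pmf p. of_real (pmf p U) * ?w U xs)"
    unfolding mat_apply_def T_op_finite_pmf[OF fin]
    by (simp add: sum_distrib_left sum_distrib_right sum.swap[of _ "idx t"] mult_ac)
  then have "vec_norm (idx t) (mat_apply (idx t) (T_op (measure_pmf p) t) v)
      \<le> (\<Sum>U\<in>set_pmf p. vec_norm (idx t) (\<lambda>xs. of_real (pmf p U) * ?w U xs))"
    using vec_norm_sum_le[OF fin] by simp
  also have "\<dots> = (\<Sum>U\<in>set_pmf p. pmf p U * vec_norm (idx t) v)"
    unfolding vec_norm_scaleR using unitary by (intro sum.cong) (auto simp: vec_norm_tensor_entry_apply)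
  also have "\<dots> = vec_norm (idx t) v"
    by (simp add: sum_distrib_right[symmetric] sum_pmf_eq_1[OF fin])
  finally show ?thesis .
qed

lemma sum_of_real_pmf_eq_1:
  "finite (set_pmf p) \<Longrightarrow> (\<Sum>x\<in>set_pmf p. of_real (pmf p x)) = (1 :: 'a::real_algebra_1)"
  by (metis of_real_1 of_real_sum sum_pmf_eq_1 order_refl)

lemma T_op_mult_T_op_haar:
  assumes "is_haar \<mu>" "finite (set_pmf p)" "set_pmf p \<subseteq> unitary_group"
  shows "mat_mult (idx t) (T_op (measure_pmf p) t) (T_op \<mu> t) = T_op \<mu> t"
proof (intro ext)
  fix xs ys
  have "mat_mult (idx t) (T_op (measure_pmf p) t) (T_op \<mu> t) xs ys
      = (\<Sum>U\<in>set_pmf p. pmf p U * mat_mult (idx t) (tensor_entry t U) (T_op \<mu> t) xs ys)"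
    unfolding mat_mult_def T_op_finite_pmf[OF assms(2)]
    by (simp add: sum_distrib_left sum_distrib_right sum.swap[of _ "idx t"] mult_ac)
  also have "\<dots> = (\<Sum>U\<in>set_pmf p. pmf p U * T_op \<mu> t xs ys)"
    using assms(3) by (intro sum.cong) (auto simp: T_op_haar_left_invariant[OF assms(1)])
  finally show "mat_mult (idx t) (T_op (measure_pmf p) t) (T_op \<mu> t) xs ys = T_op \<mu> t xs ys"
    by (simp add: sum_distrib_right[symmetric] sum_of_real_pmf_eq_1[OF assms(2)])
qed

lemma T_op_haar_mult_T_op:
  assumes "is_haar \<mu>" "finite (set_pmf p)" "set_pmf p \<subseteq> unitary_group"
  shows "mat_mult (idx t) (T_op \<mu> t) (T_op (measure_pmf p) t) = T_op \<mu> t"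
proof (intro ext)
  fix xs ys
  have "mat_mult (idx t) (T_op \<mu> t) (T_op (measure_pmf p) t) xs ys
      = (\<Sum>U\<in>set_pmf p. pmf p U * mat_mult (idx t) (T_op \<mu> t) (tensor_entry t U) xs ys)"
    unfolding mat_mult_def T_op_finite_pmf[OF assms(2)]
    by (simp add: sum_distrib_left sum.swap[of _ "idx t"] mult_ac)
  also have "\<dots> = (\<Sum>U\<in>set_pmf p. pmf p U * T_op \<mu> t xs ys)"
    using assms(3) by (intro sum.cong) (auto simp: T_op_haar_right_invariant[OF assms(1)])
  finally show "mat_mult (idx t) (T_op \<mu> t) (T_op (measure_pmf p) t) xs ys = T_op \<mu> t xs ys"
    by (simp add: sum_distrib_right[symmetric] sum_of_real_pmf_eq_1[OF assms(2)])
qed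

lemma delta_conv_map_pmf_adjoint:
  assumes haar: "is_haar \<mu>" and fin: "finite (set_pmf p)" and unitary: "set_pmf p \<subseteq> unitary_group"
  shows "delta \<mu> (measure_pmf (conv p (map_pmf adjoint p))) t = (delta \<mu> (measure_pmf p) t)\<^sup>2"
    and "delta \<mu> (measure_pmf p) t \<le> 1"
proof -
  define A where "A = T_op (measure_pmf p) t"
  define P where "P = T_op \<mu> t"
  have fin_adj: "finite (set_pmf (map_pmf adjoint p))"
    using fin by simp
  have unitary_adj: "set_pmf (map_pmf adjoint p) \<subseteq> unitary_group"
    using unitary adjoint_in_unitary_group by auto
  have PP: "mat_mult (idx t) (mat_adj P) P = P"
    unfolding P_def by (rule T_op_haar_adj_mult_self[OF haar])
  have AP: "mat_mult (idx t) A P = P"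
    unfolding A_def P_def by (rule T_op_mult_T_op_haar[OF haar fin unitary])
  have PA: "mat_mult (idx t) P (mat_adj A) = P"
    using T_op_haar_mult_T_op[OF haar fin_adj unitary_adj]
    unfolding A_def P_def T_op_map_pmf_adjoint .
  have "delta \<mu> (measure_pmf (conv p (map_pmf adjoint p))) t
      = op_norm (idx t) (\<lambda>xs ys. mat_mult (idx t) A (mat_adj A) xs ys - P xs ys)"
    unfolding delta_def T_op_conv[OF fin fin_adj] T_op_map_pmf_adjoint A_def P_def ..
  also have "\<dots> = (op_norm (idx t) (\<lambda>xs ys. A xs ys - P xs ys))\<^sup>2"
    unfolding op_norm_power2_eq_op_norm_mult_mat_adj[OF finite_idx] mat_mult_diff_proj_mat_adj[OF PP AP PA] ..
  finally show "delta \<mu> (measure_pmf (conv p (map_pmf adjoint p))) t = (delta \<mu> (measure_pmf p) t)\<^sup>2"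
    unfolding delta_def A_def P_def .
  show "delta \<mu> (measure_pmf p) t \<le> 1"
    unfolding delta_def
    using op_norm_diff_proj_le_1[OF finite_idx PP AP] vec_norm_T_op_apply_le[OF fin unitary]
    unfolding A_def P_def by blast
qed

theorem lemma4:
  fixes G :: "(complex^'d::finite^'d) set" and \<mu> :: "(complex^'d^'d) measure" and t :: nat
  assumes "finite G" and "G \<noteq> {}" and "G \<subseteq> unitary_group"
    and "is_haar \<mu>" and "t > 0"
  shows "(delta \<mu> (measure_pmf (unif G)) t)\<^sup>2
           = delta \<mu> (measure_pmf (conv (unif G) (unif (adjoint ` G)))) t
       \<and> gap \<mu> (measure_pmf (conv (unif G) (unif (adjoint ` G)))) t / 2
           \<le> gap \<mu> (measure_pmf (unif G)) t
       \<and> gap \<mu> (measure_pmf (unif G)) t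
           \<le> gap \<mu> (measure_pmf (conv (unif G) (unif (adjoint ` G)))) t"
proof -
  have "inj_on adjoint G"
    by (metis adjoint_adjoint inj_on_def)
  then have unif_adj: "unif (adjoint ` G) = map_pmf adjoint (unif G)"
    unfolding unif_def using assms(1,2) by (simp add: map_pmf_of_set_inj)
  have set_unif: "set_pmf (unif G) = G"
    unfolding unif_def using assms(1,2) by simp
  define d where "d = delta \<mu> (measure_pmf (unif G)) t"
  have d_sq: "delta \<mu> (measure_pmf (conv (unif G) (unif (adjoint ` G)))) t = d\<^sup>2"
    and d_le_1: "d \<le> 1"
    unfolding d_def unif_adj
    using delta_conv_map_pmf_adjoint[OF assms(4), of "unif G"] set_unif assms(1,3) by simp_all
  have "0 \<le> d"
    unfolding d_def delta_def by (rule op_norm_nonneg[OF finite_idx])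
  have "(1 - d\<^sup>2) / 2 \<le> 1 - d"
    using zero_le_power2[of "1 - d"] by (simp add: power2_eq_square field_simps)
  moreover have "1 - d \<le> 1 - d\<^sup>2"
    using mult_right_mono[OF d_le_1 \<open>0 \<le> d\<close>] by (simp add: power2_eq_square)
  ultimately show ?thesis
    unfolding gap_def d_sq d_def[symmetric] by simp
qed

end
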